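(* Consider the following setting. There are $K$ arms and $T$ rounds; the loss of arm $i$ at round $t$ is $\ell_t(i)$. At the beginning of each round $t$ the learner is given numbers $m_t(i)$ and $\epsilon_t(i)\ge 0$, $i=1,\dots,K$, with the guarantee $|\ell_t(i)-m_t(i)|\le \epsilon_t(i)$ for all $i$. Let $j_t\in\arg\min_i\{m_t(i)-\epsilon_t(i)\}$ (ties broken in favour of the smallest $\epsilon_t(i)$, remaining ties arbitrarily). Call arm $i$ bad at round $t$ if $m_t(i)-\epsilon_t(i)>m_t(j_t)+\epsilon_t(j_t)$ and good otherwise. Define the transformed losses $\tilde\ell_t(i)=\ell_t(i)-m_t(j_t)+\epsilon_t(j_t)$ if $i$ is good and $\tilde\ell_t(i)=2\epsilon_t(j_t)$ if $i$ is bad. Let $\mathcal{A}$ be any online algorithm, and run the meta-algorithm which, at each round $t$: gets a recommended arm $\tilde I_t$ from $\mathcal{A}$; plays $I_t=\tilde I_t$ if $\tilde I_t$ is good and $I_t=j_t$ otherwise; and feeds $\mathcal{A}$ the feedback it would receive if the loss vector were $\tilde{\boldsymbol\ell}_t$ and its chosen arm were $\tilde I_t$. Suppose $\tilde I_t$ is drawn from a probability distribution $\tilde p_t(1),\dots,\tilde p_t(K)$, and let $p_t(1),\dots,p_t(K)$ be the induced distribution of $I_t$, i.e. $p_t(i)=\tilde p_t(i)$ if $i\ne j_t$ is good, $p_t(i)=0$ if $i$ is bad, and $p_t(j_t)=\tilde p_t(j_t)+\sum_{i\text{ bad}}\tilde p_t(i)$. Then for any fixed arm $a\in\{1,\dots,K\}$,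 \[ \sum_{t=1}^{T}\sum_{i=1}^{K}p_t(i)\ell_t(i)-\sum_{t=1}^{T}\ell_t(a)\;\le\;\sum_{t=1}^{T}\sum_{i=1}^{K}\tilde p_t(i)\tilde\ell_t(i)-\sum_{t=1}^{T}\tilde\ell_t(a). \] In particular, \[ \mathbb{E}\Big[\sum_{t=1}^{T}\ell_t(I_t)\Big]-\sum_{t=1}^{T}\ell_t(a)\;\le\;\mathbb{E}\Big[\sum_{t=1}^{T}\big(\tilde\ell_t(\tilde I_t)-\tilde\ell_t(a)\big)\Big], \] where the expectation is over the randomness of $\mathcal{A}$. Moreover, $\tilde\ell_t(i)\in[0,2(\epsilon_t(j_t)+\epsilon_t(i))]$ for every good $i$, and $\tilde\ell_t(i)=2\epsilon_t(j_t)$ for every bad $i$.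
   Context: The losses are fixed in advance by an oblivious adversary. $\mathcal{A}$ receives, after each round, a feedback that is a function $f_t(\boldsymbol\ell,I)$ of a loss vector and a chosen arm (e.g. $f_t(\boldsymbol\ell,I)=\ell(I)$ for bandit feedback, $f_t(\boldsymbol\ell,I)=\boldsymbol\ell$ for full information); it is assumed that $f_t(\tilde{\boldsymbol\ell}_t,\tilde I_t)$ can be computed from $f_t(\boldsymbol\ell_t,I_t)$ and the side information. *)

theory Defs
  imports "HOL-Probability.Probability"
begin

definition is_ref_arm :: "nat \<Rightarrow> (nat \<Rightarrow> nat \<Rightarrow> real) \<Rightarrow> (nat \<Rightarrow> nat \<Rightarrow> real) \<Rightarrow> nat \<Rightarrow> nat \<Rightarrow> bool" where
  "is_ref_arm K m eps t j \<longleftrightarrow> j \<in> {1..K} \<and>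
     (\<forall>i\<in>{1..K}. m t j - eps t j \<le> m t i - eps t i) \<and>
     (\<forall>i\<in>{1..K}. m t i - eps t i = m t j - eps t j \<longrightarrow> eps t j \<le> eps t i)"

definition bad_arm :: "(nat \<Rightarrow> nat \<Rightarrow> real) \<Rightarrow> (nat \<Rightarrow> nat \<Rightarrow> real) \<Rightarrow> (nat \<Rightarrow> nat) \<Rightarrow> nat \<Rightarrow> nat \<Rightarrow> bool" where
  "bad_arm m eps j t i \<longleftrightarrow> m t i - eps t i > m t (j t) + eps t (j t)"

definition tloss :: "(nat \<Rightarrow> nat \<Rightarrow> real) \<Rightarrow> (nat \<Rightarrow> nat \<Rightarrow> real) \<Rightarrow> (nat \<Rightarrow> nat \<Rightarrow> real) \<Rightarrow> (nat \<Rightarrow> nat) \<Rightarrow> nat \<Rightarrow> nat \<Rightarrow> real" where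
  "tloss l m eps j t i = (if bad_arm m eps j t i then 2 * eps t (j t)
                          else l t i - m t (j t) + eps t (j t))"

definition induced_dist :: "nat \<Rightarrow> (nat \<Rightarrow> nat \<Rightarrow> real) \<Rightarrow> (nat \<Rightarrow> nat \<Rightarrow> real) \<Rightarrow> (nat \<Rightarrow> nat) \<Rightarrow> (nat \<Rightarrow> nat \<Rightarrow> real) \<Rightarrow> nat \<Rightarrow> nat \<Rightarrow> real" where
  "induced_dist K m eps j pt t i =
     (if i = j t then pt t (j t) + (\<Sum>k\<in>{k\<in>{1..K}. bad_arm m eps j t k}. pt t k)
      else if bad_arm m eps j t i then 0 else pt t i)"

definition played_arm :: "(nat \<Rightarrow> nat \<Rightarrow> real) \<Rightarrow> (nat \<Rightarrow> nat \<Rightarrow> real) \<Rightarrow> (nat \<Rightarrow> nat) \<Rightarrow> nat \<Rightarrow> nat \<Rightarrow> nat" where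
  "played_arm m eps j t it = (if bad_arm m eps j t it then j t else it)"

end

theory Submission
  imports Defs
begin

text \<open>Shifting all losses of round \<open>t\<close> by the lower confidence bound
  \<open>m t (j t) - eps t (j t)\<close> of the reference arm does not change regrets, and \<open>2 eps t (j t)\<close>
  bounds the shifted loss of \<open>j t\<close>, while every bad arm has a larger true loss than \<open>j t\<close>.
  Hence, round by round and for every recommendation, the true regret of the played arm is at
  most the transformed regret of the recommended one; averaging over the recommendation and
  summing over rounds transfers the inequality to expected regrets.\<close>

lemma played_arm_regret_le_tloss_regret:
  fixes l m eps :: "nat \<Rightarrow> nat \<Rightarrow> real"
  assumes "\<bar>l t (j t) - m t (j t)\<bar> \<le> eps t (j t)"
    and "\<bar>l t a - m t a\<bar> \<le> eps t a"
    and "m t (j t) - eps t (j t) \<le> m t a - eps t a"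
  shows "l t (played_arm m eps j t i) - l t a \<le> tloss l m eps j t i - tloss l m eps j t a"
  using assms unfolding played_arm_def tloss_def bad_arm_def
  by (auto simp: abs_le_iff split: if_splits)

lemma tloss_good_arm_bounds:
  fixes l m eps :: "nat \<Rightarrow> nat \<Rightarrow> real"
  assumes "\<not> bad_arm m eps j t i"
    and "\<bar>l t i - m t i\<bar> \<le> eps t i"
    and "m t (j t) - eps t (j t) \<le> m t i - eps t i"
  shows "0 \<le> tloss l m eps j t i \<and> tloss l m eps j t i \<le> 2 * (eps t (j t) + eps t i)"
  using assms unfolding tloss_def bad_arm_def by (auto simp: abs_le_iff)

lemma sum_induced_dist_mult:
  fixes f :: "nat \<Rightarrow> real"
  assumes "j t \<in> {1..K}" and "\<not> bad_arm m eps j t (j t)"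
  shows "(\<Sum>i=1..K. induced_dist K m eps j pt t i * f i)
       = (\<Sum>i=1..K. pt t i * f (played_arm m eps j t i))"
proof -
  let ?bad = "\<lambda>i. bad_arm m eps j t i"
  let ?S = "\<Sum>k\<in>{k\<in>{1..K}. ?bad k}. pt t k"
  have "(\<Sum>i=1..K. induced_dist K m eps j pt t i * f i)
      = (\<Sum>i=1..K. (if ?bad i then 0 else pt t i * f i) + (if i = j t then ?S * f (j t) else 0))"
    by (rule sum.cong) (use assms(2) in \<open>auto simp: induced_dist_def algebra_simps\<close>)
  also have "\<dots> = (\<Sum>i=1..K. if ?bad i then 0 else pt t i * f i) + ?S * f (j t)"
    using assms(1) by (simp add: sum.distrib)
  also have "?S * f (j t) = (\<Sum>i=1..K. if ?bad i then pt t i * f (j t) else 0)"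
    by (simp add: sum.inter_filter[symmetric] sum_distrib_right)
  also have "(\<Sum>i=1..K. if ?bad i then 0 else pt t i * f i) + \<dots>
      = (\<Sum>i=1..K. pt t i * f (played_arm m eps j t i))"
    by (simp add: sum.distrib[symmetric] played_arm_def, intro sum.cong) auto
  finally show ?thesis .
qed

lemma convex_combination_diff_mono:
  fixes p f g :: "'a \<Rightarrow> real"
  assumes "\<And>i. i \<in> A \<Longrightarrow> p i \<ge> 0" and "sum p A = 1"
    and "\<And>i. i \<in> A \<Longrightarrow> f i - c \<le> g i - d"
  shows "(\<Sum>i\<in>A. p i * f i) - c \<le> (\<Sum>i\<in>A. p i * g i) - d"
proof -
  have "(\<Sum>i\<in>A. p i * f i) - c = (\<Sum>i\<in>A. p i * (f i - c))"
    using assms(2) by (simp add: right_diff_distrib sum_subtractf sum_distrib_right[symmetric])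
  also have "\<dots> \<le> (\<Sum>i\<in>A. p i * (g i - d))"
    by (intro sum_mono mult_left_mono) (use assms in auto)
  also have "\<dots> = (\<Sum>i\<in>A. p i * g i) - d"
    using assms(2) by (simp add: right_diff_distrib sum_subtractf sum_distrib_right[symmetric])
  finally show ?thesis .
qed

lemma sum_diff_mono:
  fixes f c g d :: "'a \<Rightarrow> real"
  assumes "\<And>t. t \<in> S \<Longrightarrow> f t - c t \<le> g t - d t"
  shows "(\<Sum>t\<in>S. f t) - (\<Sum>t\<in>S. c t) \<le> (\<Sum>t\<in>S. g t) - (\<Sum>t\<in>S. d t)"
  using sum_mono[of S "\<lambda>t. f t - c t" "\<lambda>t. g t - d t"] assms by (simp add: sum_subtractf)

lemma (in prob_space) integrable_sum_comp_finite_valued: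
  fixes g :: "'i \<Rightarrow> 'v \<Rightarrow> real"
  assumes "finite S" and "finite A"
    and "\<And>t. t \<in> S \<Longrightarrow> X t \<in> M \<rightarrow>\<^sub>M count_space UNIV"
    and "\<And>t w. t \<in> S \<Longrightarrow> w \<in> space M \<Longrightarrow> X t w \<in> A"
  shows "integrable M (\<lambda>w. \<Sum>t\<in>S. g t (X t w))"
proof (rule integrable_const_bound[where B="\<Sum>t\<in>S. \<Sum>i\<in>A. \<bar>g t i\<bar>"])
  show "AE w in M. norm (\<Sum>t\<in>S. g t (X t w)) \<le> (\<Sum>t\<in>S. \<Sum>i\<in>A. \<bar>g t i\<bar>)"
  proof (rule AE_I2)
    fix w assume w: "w \<in> space M"
    have "norm (\<Sum>t\<in>S. g t (X t w)) \<le> (\<Sum>t\<in>S. \<bar>g t (X t w)\<bar>)"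
      by (simp add: sum_abs)
    also have "\<dots> \<le> (\<Sum>t\<in>S. \<Sum>i\<in>A. \<bar>g t i\<bar>)"
      by (intro sum_mono member_le_sum) (use assms(2,4) w in auto)
    finally show "norm (\<Sum>t\<in>S. g t (X t w)) \<le> (\<Sum>t\<in>S. \<Sum>i\<in>A. \<bar>g t i\<bar>)" .
  qed
  show "(\<lambda>w. \<Sum>t\<in>S. g t (X t w)) \<in> borel_measurable M"
    by (intro borel_measurable_sum measurable_compose[OF assms(3)]) auto
qed

lemma (in prob_space) expected_sum_diff_mono:
  fixes f g :: "'i \<Rightarrow> 'v \<Rightarrow> real" and c d :: "'i \<Rightarrow> real"
  assumes "finite S" and "finite A"
    and "\<And>t. t \<in> S \<Longrightarrow> X t \<in> M \<rightarrow>\<^sub>M count_space UNIV"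
    and "\<And>t w. t \<in> S \<Longrightarrow> w \<in> space M \<Longrightarrow> X t w \<in> A"
    and "\<And>t i. t \<in> S \<Longrightarrow> f t i - c t \<le> g t i - d t"
  shows "(\<integral>w. (\<Sum>t\<in>S. f t (X t w)) \<partial>M) - (\<Sum>t\<in>S. c t)
       \<le> (\<integral>w. (\<Sum>t\<in>S. g t (X t w) - d t) \<partial>M)"
proof -
  have f_int: "integrable M (\<lambda>w. \<Sum>t\<in>S. f t (X t w))"
    and g_int: "integrable M (\<lambda>w. \<Sum>t\<in>S. g t (X t w) - d t)"
    by (rule integrable_sum_comp_finite_valued[where X=X, OF assms(1-4)], assumption+)+
  have "(\<integral>w. (\<Sum>t\<in>S. f t (X t w)) \<partial>M) - (\<Sum>t\<in>S. c t)
      = (\<integral>w. (\<Sum>t\<in>S. f t (X t w)) - (\<Sum>t\<in>S. c t) \<partial>M)"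
    using f_int by (simp add: prob_space)
  also have "\<dots> \<le> (\<integral>w. (\<Sum>t\<in>S. g t (X t w) - d t) \<partial>M)"
    using f_int g_int assms(5) by (intro integral_mono) (auto simp: sum_subtractf intro: sum_diff_mono)
  finally show ?thesis .
qed

theorem theorem1:
  fixes K T :: nat and l m eps :: "nat \<Rightarrow> nat \<Rightarrow> real" and j :: "nat \<Rightarrow> nat" and a :: nat
  assumes "K \<ge> 1"
    and eps_nonneg: "\<And>t i. t \<in> {1..T} \<Longrightarrow> i \<in> {1..K} \<Longrightarrow> eps t i \<ge> 0"
    and approx: "\<And>t i. t \<in> {1..T} \<Longrightarrow> i \<in> {1..K} \<Longrightarrow> \<bar>l t i - m t i\<bar> \<le> eps t i"
    and ref: "\<And>t. t \<in> {1..T} \<Longrightarrow> is_ref_arm K m eps t (j t)"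
    and a: "a \<in> {1..K}"
  shows
    "(\<forall>pt :: nat \<Rightarrow> nat \<Rightarrow> real.
        (\<forall>t\<in>{1..T}. (\<forall>i\<in>{1..K}. pt t i \<ge> 0) \<and> (\<Sum>i=1..K. pt t i) = 1) \<longrightarrow>
        (\<Sum>t=1..T. \<Sum>i=1..K. induced_dist K m eps j pt t i * l t i) - (\<Sum>t=1..T. l t a)
          \<le> (\<Sum>t=1..T. \<Sum>i=1..K. pt t i * tloss l m eps j t i) - (\<Sum>t=1..T. tloss l m eps j t a))
     \<and>
     (\<forall>(M :: 'w measure) (It :: nat \<Rightarrow> 'w \<Rightarrow> nat).
        prob_space M \<and>
        (\<forall>t\<in>{1..T}. It t \<in> M \<rightarrow>\<^sub>M count_space UNIV \<and> (\<forall>w\<in>space M. It t w \<in> {1..K})) \<longrightarrow>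
        (\<integral>w. (\<Sum>t=1..T. l t (played_arm m eps j t (It t w))) \<partial>M) - (\<Sum>t=1..T. l t a)
          \<le> (\<integral>w. (\<Sum>t=1..T. tloss l m eps j t (It t w) - tloss l m eps j t a) \<partial>M))
     \<and>
     (\<forall>t\<in>{1..T}. \<forall>i\<in>{1..K}.
        (\<not> bad_arm m eps j t i \<longrightarrow>
           0 \<le> tloss l m eps j t i \<and> tloss l m eps j t i \<le> 2 * (eps t (j t) + eps t i))
        \<and> (bad_arm m eps j t i \<longrightarrow> tloss l m eps j t i = 2 * eps t (j t)))"
proof -
  have j_arm: "j t \<in> {1..K}" and j_min: "\<And>i. i \<in> {1..K} \<Longrightarrow> m t (j t) - eps t (j t) \<le> m t i - eps t i"
    if "t \<in> {1..T}" for t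
    using ref[OF that] by (auto simp: is_ref_arm_def)
  have j_good: "\<not> bad_arm m eps j t (j t)" if "t \<in> {1..T}" for t
    using eps_nonneg[OF that j_arm[OF that]] by (simp add: bad_arm_def)
  have round_regret: "l t (played_arm m eps j t i) - l t a \<le> tloss l m eps j t i - tloss l m eps j t a"
    if "t \<in> {1..T}" for t i
    using that j_arm j_min a approx by (intro played_arm_regret_le_tloss_regret) auto
  show ?thesis
  proof (intro conjI allI impI)
    fix pt :: "nat \<Rightarrow> nat \<Rightarrow> real"
    assume pt: "\<forall>t\<in>{1..T}. (\<forall>i\<in>{1..K}. pt t i \<ge> 0) \<and> (\<Sum>i=1..K. pt t i) = 1"
    have "(\<Sum>i=1..K. induced_dist K m eps j pt t i * l t i) - l t a
        \<le> (\<Sum>i=1..K. pt t i * tloss l m eps j t i) - tloss l m eps j t a" if t: "t \<in> {1..T}" for t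
      unfolding sum_induced_dist_mult[OF j_arm[OF t] j_good[OF t]]
      using pt t round_regret[OF t] by (intro convex_combination_diff_mono) auto
    then show "(\<Sum>t=1..T. \<Sum>i=1..K. induced_dist K m eps j pt t i * l t i) - (\<Sum>t=1..T. l t a)
        \<le> (\<Sum>t=1..T. \<Sum>i=1..K. pt t i * tloss l m eps j t i) - (\<Sum>t=1..T. tloss l m eps j t a)"
      by (rule sum_diff_mono)
  next
    fix M :: "'w measure" and It :: "nat \<Rightarrow> 'w \<Rightarrow> nat"
    assume hyp: "prob_space M \<and>
      (\<forall>t\<in>{1..T}. It t \<in> M \<rightarrow>\<^sub>M count_space UNIV \<and> (\<forall>w\<in>space M. It t w \<in> {1..K}))"
    then interpret prob_space M by simp
    show "(\<integral>w. (\<Sum>t=1..T. l t (played_arm m eps j t (It t w))) \<partial>M) - (\<Sum>t=1..T. l t a)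
        \<le> (\<integral>w. (\<Sum>t=1..T. tloss l m eps j t (It t w) - tloss l m eps j t a) \<partial>M)"
      by (rule expected_sum_diff_mono[where A="{1..K}" and f="\<lambda>t i. l t (played_arm m eps j t i)" and c="\<lambda>t. l t a"])
         (use hyp round_regret in auto)
  next
    show "\<forall>t\<in>{1..T}. \<forall>i\<in>{1..K}.
        (\<not> bad_arm m eps j t i \<longrightarrow>
          0 \<le> tloss l m eps j t i \<and> tloss l m eps j t i \<le> 2 * (eps t (j t) + eps t i))
        \<and> (bad_arm m eps j t i \<longrightarrow> tloss l m eps j t i = 2 * eps t (j t))"
      using tloss_good_arm_bounds approx j_min by (auto simp: tloss_def)
  qed
qed

end
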